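(* The monoid $\mathrm{Mon}(R)$ is a BF-monoid. Moreover: (1) $\mathrm{Mon}(R)$ is neither locally finitely generated nor transfer Krull; (2) $\mathcal U_k(\mathrm{Mon}(R))=\mathbb N_{\ge2}$ for all $k\ge2$; (3) $\mathsf L_{\mathrm{Mon}(R)}(\mathfrak a_k)=[2,k]$ for all $k\ge2$, where $\mathfrak a_k=\langle X,Y\rangle^k$; (4) $\mathrm{Mon}(R)$ is fully elastic.
   Context: Let $K$ be a field, $N\ge2$, $R=K[X_1,\dots,X_N]$, $X=X_1$, $Y=X_2$. $\mathrm{Mon}(R)$ is the monoid of nonzero monomial ideals of $R$ under ideal multiplication, with identity $R$ (its only unit). An atom of $\mathrm{Mon}(R)$ is an $I\ne R$ in $\mathrm{Mon}(R)$ not a product of two elements of $\mathrm{Mon}(R)\setminus\{R\}$. For a monoid $H$ (commutative, unit-cancellative) and $a\in H$, $\mathsf L_H(a)$ is the set of $k$ such that $a$ is a product of $k$ atoms, and $\mathcal L(H)=\{\mathsf L_H(a):a\in H\}$. $H$ is a BF-monoid if every $\mathsf L_H(a)$ is finite and nonempty. $\mathcal U_k(H)=\bigcup\{L\in\mathcal L(H):k\in L\}$. $H$ is locally finitely generated if for every $a\in H$ the smallest divisor-closed submonoid of $H$ containing $a$ is finitely generated up to units. A Krull monoid is a commutative cancellative monoid satisfying the ascending chain condition on divisorial ideals and completely integrally closed; a monoid homomorphism $\theta:H\to K'$ is a transfer homomorphism if $K'=\theta(H)K'^\times$, $\theta^{-1}(K'^\times)=H^\times$, and whenever $\theta(a)=\beta\gamma$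 there are $b,c\in H$ with $a=bc$, $\theta(b)\in\beta K'^\times$, $\theta(c)\in\gamma K'^\times$; $H$ is transfer Krull if there is a transfer homomorphism from $H$ to a Krull monoid. For a finite nonempty $L\subseteq\mathbb N$, $\rho(L)=\max L/\min L$ (with $\rho(\{0\})=1$), and $\rho(H)=\sup\{\rho(L):L\in\mathcal L(H)\}$; $H$ is fully elastic if for every rational $q$ with $1<q<\rho(H)$ there is $L\in\mathcal L(H)$ with $\rho(L)=q$. $[x,y]=\{z\in\mathbb Z:x\le z\le y\}$. *)

theory Defs
  imports "HOL-Algebra.Group" "HOL-Library.Extended_Real"
begin

text \<open>A nonzero monomial ideal of the polynomial ring in the variables indexed by the
  finite type 'n is determined by the set of exponent vectors (elements of 'n => nat)
  of the monomials it contains; these sets are exactly the nonempty upward closed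
  subsets of ('n => nat).  The product of two monomial ideals is generated by the
  products of monomials, i.e. corresponds to the sumset of the exponent sets.
  The identity R corresponds to UNIV (the exponent set of the unit ideal).
  None of this depends on the field K.\<close>

definition MonR :: "('n::finite \<Rightarrow> nat) set monoid" where
  "MonR = \<lparr> carrier = {I. I \<noteq> {} \<and> (\<forall>a\<in>I. \<forall>b. a \<le> b \<longrightarrow> b \<in> I)},
            mult = (\<lambda>I J. {(\<lambda>i. a i + b i) | a b. a \<in> I \<and> b \<in> J}),
            one = UNIV \<rparr>"

definition XY_ideal :: "'n::finite \<Rightarrow> 'n \<Rightarrow> ('n \<Rightarrow> nat) set" where
  "XY_ideal x y = {a. 1 \<le> a x \<or> 1 \<le> a y}"

definition lprod :: "('a, 'b) monoid_scheme \<Rightarrow> 'a list \<Rightarrow> 'a" where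
  "lprod H xs = foldr (\<lambda>u v. u \<otimes>\<^bsub>H\<^esub> v) xs \<one>\<^bsub>H\<^esub>"

definition atom :: "('a, 'b) monoid_scheme \<Rightarrow> 'a \<Rightarrow> bool" where
  "atom H a \<longleftrightarrow> a \<in> carrier H \<and> a \<notin> Units H \<and>
     (\<forall>b\<in>carrier H. \<forall>c\<in>carrier H. a = b \<otimes>\<^bsub>H\<^esub> c \<longrightarrow> b \<in> Units H \<or> c \<in> Units H)"

definition Lset :: "('a, 'b) monoid_scheme \<Rightarrow> 'a \<Rightarrow> nat set" where
  "Lset H a = {k. \<exists>xs. length xs = k \<and> (\<forall>z\<in>set xs. atom H z) \<and> a = lprod H xs}"

definition LL :: "('a, 'b) monoid_scheme \<Rightarrow> nat set set" where
  "LL H = Lset H ` carrier H"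

definition BF_monoid :: "('a, 'b) monoid_scheme \<Rightarrow> bool" where
  "BF_monoid H \<longleftrightarrow> (\<forall>a\<in>carrier H. finite (Lset H a) \<and> Lset H a \<noteq> {})"

definition Uk :: "('a, 'b) monoid_scheme \<Rightarrow> nat \<Rightarrow> nat set" where
  "Uk H k = \<Union>{L \<in> LL H. k \<in> L}"

definition rho :: "nat set \<Rightarrow> real" where
  "rho L = (if L = {0} then 1 else real (Max L) / real (Min L))"

definition rho_monoid :: "('a, 'b) monoid_scheme \<Rightarrow> ereal" where
  "rho_monoid H = Sup ((\<lambda>L. ereal (rho L)) ` LL H)"

definition fully_elastic :: "('a, 'b) monoid_scheme \<Rightarrow> bool" where
  "fully_elastic H \<longleftrightarrow>
     (\<forall>q::rat. 1 < q \<and> ereal (of_rat q) < rho_monoid H \<longrightarrow> (\<exists>L\<in>LL H. rho L = of_rat q))"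

definition divides_in :: "('a, 'b) monoid_scheme \<Rightarrow> 'a \<Rightarrow> 'a \<Rightarrow> bool" where
  "divides_in H b a \<longleftrightarrow> (\<exists>c\<in>carrier H. a = b \<otimes>\<^bsub>H\<^esub> c)"

definition div_closed_submonoid :: "('a, 'b) monoid_scheme \<Rightarrow> 'a set \<Rightarrow> bool" where
  "div_closed_submonoid H S \<longleftrightarrow> S \<subseteq> carrier H \<and> \<one>\<^bsub>H\<^esub> \<in> S \<and>
     (\<forall>u\<in>S. \<forall>v\<in>S. u \<otimes>\<^bsub>H\<^esub> v \<in> S) \<and>
     (\<forall>a\<in>S. \<forall>b\<in>carrier H. divides_in H b a \<longrightarrow> b \<in> S)"

definition dc_hull :: "('a, 'b) monoid_scheme \<Rightarrow> 'a \<Rightarrow> 'a set" where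
  "dc_hull H a = \<Inter>{S. div_closed_submonoid H S \<and> a \<in> S}"

definition sub_units :: "('a, 'b) monoid_scheme \<Rightarrow> 'a set \<Rightarrow> 'a set" where
  "sub_units H S = {u \<in> S. \<exists>v\<in>S. u \<otimes>\<^bsub>H\<^esub> v = \<one>\<^bsub>H\<^esub> \<and> v \<otimes>\<^bsub>H\<^esub> u = \<one>\<^bsub>H\<^esub>}"

definition fg_up_to_units :: "('a, 'b) monoid_scheme \<Rightarrow> 'a set \<Rightarrow> bool" where
  "fg_up_to_units H S \<longleftrightarrow> (\<exists>E. finite E \<and> E \<subseteq> S \<and>
     (\<forall>s\<in>S. \<exists>u\<in>sub_units H S. \<exists>xs. set xs \<subseteq> E \<and> s = u \<otimes>\<^bsub>H\<^esub> lprod H xs))"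

definition locally_fg :: "('a, 'b) monoid_scheme \<Rightarrow> bool" where
  "locally_fg H \<longleftrightarrow> (\<forall>a\<in>carrier H. fg_up_to_units H (dc_hull H a))"

text \<open>A commutative cancellative monoid is represented as a submonoid D of an abelian
  group G (every such monoid embeds in its quotient group); its quotient group is
  q(D) = {a b^-1 : a, b in D}.\<close>

definition quot_grp :: "'g monoid \<Rightarrow> 'g set \<Rightarrow> 'g set" where
  "quot_grp G D = {a \<otimes>\<^bsub>G\<^esub> inv\<^bsub>G\<^esub> b | a b. a \<in> D \<and> b \<in> D}"

definition v_inv :: "'g monoid \<Rightarrow> 'g set \<Rightarrow> 'g set \<Rightarrow> 'g set" where
  "v_inv G D X = {z \<in> quot_grp G D. \<forall>w\<in>X. z \<otimes>\<^bsub>G\<^esub> w \<in> D}"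

definition divisorial_ideal :: "'g monoid \<Rightarrow> 'g set \<Rightarrow> 'g set \<Rightarrow> bool" where
  "divisorial_ideal G D A \<longleftrightarrow> A \<subseteq> D \<and> v_inv G D (v_inv G D A) = A"

definition Krull_in :: "'g monoid \<Rightarrow> 'g set \<Rightarrow> bool" where
  "Krull_in G D \<longleftrightarrow> comm_group G \<and> D \<subseteq> carrier G \<and> \<one>\<^bsub>G\<^esub> \<in> D \<and>
     (\<forall>u\<in>D. \<forall>v\<in>D. u \<otimes>\<^bsub>G\<^esub> v \<in> D) \<and>
     (\<forall>f :: nat \<Rightarrow> 'g set. (\<forall>n. divisorial_ideal G D (f n)) \<and> (\<forall>n. f n \<subseteq> f (Suc n))
        \<longrightarrow> (\<exists>m. \<forall>n\<ge>m. f n = f m)) \<and>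
     (\<forall>z\<in>quot_grp G D. (\<exists>c\<in>D. \<forall>n::nat. c \<otimes>\<^bsub>G\<^esub> (z [^]\<^bsub>G\<^esub> n) \<in> D) \<longrightarrow> z \<in> D)"

definition D_units :: "'g monoid \<Rightarrow> 'g set \<Rightarrow> 'g set" where
  "D_units G D = {u \<in> D. inv\<^bsub>G\<^esub> u \<in> D}"

definition transfer_hom :: "('a, 'b) monoid_scheme \<Rightarrow> 'g monoid \<Rightarrow> 'g set \<Rightarrow> ('a \<Rightarrow> 'g) \<Rightarrow> bool" where
  "transfer_hom H G D \<theta> \<longleftrightarrow>
     (\<forall>a\<in>carrier H. \<theta> a \<in> D) \<and> \<theta> \<one>\<^bsub>H\<^esub> = \<one>\<^bsub>G\<^esub> \<and>
     (\<forall>a\<in>carrier H. \<forall>b\<in>carrier H. \<theta> (a \<otimes>\<^bsub>H\<^esub> b) = \<theta> a \<otimes>\<^bsub>G\<^esub> \<theta> b) \<and>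
     D = {\<theta> a \<otimes>\<^bsub>G\<^esub> u | a u. a \<in> carrier H \<and> u \<in> D_units G D} \<and>
     {a \<in> carrier H. \<theta> a \<in> D_units G D} = Units H \<and>
     (\<forall>a\<in>carrier H. \<forall>\<beta>\<in>D. \<forall>\<gamma>\<in>D. \<theta> a = \<beta> \<otimes>\<^bsub>G\<^esub> \<gamma> \<longrightarrow>
        (\<exists>b\<in>carrier H. \<exists>c\<in>carrier H. a = b \<otimes>\<^bsub>H\<^esub> c \<and>
           (\<exists>u\<in>D_units G D. \<theta> b = \<beta> \<otimes>\<^bsub>G\<^esub> u) \<and> (\<exists>u\<in>D_units G D. \<theta> c = \<gamma> \<otimes>\<^bsub>G\<^esub> u)))"

text \<open>H is transfer Krull via a Krull monoid whose quotient group lives in type 'g.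
  Stating the negation for a free type variable 'g covers all Krull monoids.\<close>
definition transfer_Krull :: "('a, 'b) monoid_scheme \<Rightarrow> 'g itself \<Rightarrow> bool" where
  "transfer_Krull H (T :: 'g itself) \<longleftrightarrow>
     (\<exists>(G :: 'g monoid) D \<theta>. Krull_in G D \<and> transfer_hom H G D \<theta>)"

end

(*
  Every exponent vector of a product of k proper ideals has
  total degree at least k; this bounds factorisation lengths and gives the BF property.

  The ideals generated by monomials X^i Y^(e-i), i in S, are atoms under a combinatorial condition
  on S, and two of them multiply to a power of (X,Y) as soon as their exponent sets add up to an
  interval.  This gives the factorisations (X,Y)^k = (X,Y) F (X,Y)^(n-2) of every length n in [2,k];
  the infinitely many atoms (X^d,Y^d) dividing powers of (X,Y), so that the divisor-closed
  submonoid generated by (X,Y) is not finitely generated; and the relation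
  (X,Y) (X,Y)^2 = (X,Y) (X^2,Y^2), which no transfer homomorphism to a Krull monoid respects.
  Finally X is cancellative and occurs in every factorisation of X I, so multiplying by X^t shifts
  length sets by t.  Hence every interval [a,b] with 2 <= a <= b is a length set, which yields
  U_k = N_{>=2} and every rational elasticity.
*)
theory Submission
  imports Defs "HOL-Algebra.Divisibility" "HOL-Library.Function_Algebras" "HOL-Library.Set_Algebras"
begin

section \<open>Factorisations in monoids\<close>

lemma lprod_Nil [simp]: "lprod H [] = \<one>\<^bsub>H\<^esub>"
  by (simp add: lprod_def)

lemma lprod_Cons [simp]: "lprod H (a # xs) = a \<otimes>\<^bsub>H\<^esub> lprod H xs"
  by (simp add: lprod_def)

lemma atom_in_carrier: "atom H a \<Longrightarrow> a \<in> carrier H"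
  by (simp add: atom_def)

context monoid
begin

lemma lprod_closed [simp]: "set xs \<subseteq> carrier G \<Longrightarrow> lprod G xs \<in> carrier G"
  by (induction xs) auto

lemma lprod_append:
  "set xs \<subseteq> carrier G \<Longrightarrow> set ys \<subseteq> carrier G \<Longrightarrow> lprod G (xs @ ys) = lprod G xs \<otimes> lprod G ys"
  by (induction xs) (auto simp: m_assoc)

lemma lprod_replicate: "a \<in> carrier G \<Longrightarrow> lprod G (replicate n a) = a [^] n"
proof (induction n)
  case (Suc n)
  then show ?case by (simp add: nat_pow_Suc2[symmetric])
qed simp

lemma Lset_one: "0 \<in> Lset G \<one>"
  by (auto simp: Lset_def)

lemma Lset_pow_atom: "atom G a \<Longrightarrow> n \<in> Lset G (a [^] n)"
  unfolding Lset_def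
  by (intro CollectI exI[of _ "replicate n a"]) (simp add: lprod_replicate atom_in_carrier)

lemma Lset_atom: "atom G a \<Longrightarrow> 1 \<in> Lset G a"
  using Lset_pow_atom[of a 1] by (simp add: atom_in_carrier)

lemma Lset_mult: "m \<in> Lset G a \<Longrightarrow> n \<in> Lset G b \<Longrightarrow> m + n \<in> Lset G (a \<otimes> b)"
proof -
  assume "m \<in> Lset G a" "n \<in> Lset G b"
  then obtain xs ys where
    xs: "length xs = m" "\<forall>z\<in>set xs. atom G z" "a = lprod G xs" and
    ys: "length ys = n" "\<forall>z\<in>set ys. atom G z" "b = lprod G ys"
    unfolding Lset_def by blast
  then have "a \<otimes> b = lprod G (xs @ ys)"
    by (subst lprod_append) (auto simp: atom_in_carrier)
  with xs ys show ?thesis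
    unfolding Lset_def by (intro CollectI exI[of _ "xs @ ys"]) auto
qed

lemma atom_mem_of_lprod:
  assumes "Units G = {\<one>}" "atom G z" "set xs \<subseteq> carrier G" "z = lprod G xs"
  shows "z \<in> set xs"
  using assms(3,4)
proof (induction xs)
  case Nil
  then show ?case using assms(1,2) by (simp add: atom_def)
next
  case (Cons a xs)
  then have "a \<in> Units G \<or> lprod G xs \<in> Units G"
    using assms(2) by (simp add: atom_def)
  with Cons show ?case using assms(1) by auto
qed

lemma sub_units_subset_Units: "S \<subseteq> carrier G \<Longrightarrow> sub_units G S \<subseteq> Units G"
  by (auto simp: sub_units_def Units_def)

text \<open>In a reduced monoid every atom of a finitely generated submonoid is one of its generators.\<close>
lemma finite_atoms_if_fg_up_to_units:
  assumes reduced: "Units G = {\<one>}" and "S \<subseteq> carrier G" "fg_up_to_units G S"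
  shows "finite {z \<in> S. atom G z}"
proof -
  obtain E where E: "finite E" "E \<subseteq> S"
    and gen: "\<forall>s\<in>S. \<exists>u\<in>sub_units G S. \<exists>xs. set xs \<subseteq> E \<and> s = u \<otimes> lprod G xs"
    using assms(3) unfolding fg_up_to_units_def by blast
  have "z \<in> E" if "z \<in> S" "atom G z" for z
  proof -
    obtain u xs where u: "u \<in> sub_units G S" and xs: "set xs \<subseteq> E" "z = u \<otimes> lprod G xs"
      using gen \<open>z \<in> S\<close> by blast
    have "u = \<one>" using u sub_units_subset_Units[OF assms(2)] reduced by blast
    with xs E assms(2) have "z = lprod G xs" "set xs \<subseteq> carrier G" by auto
    then show ?thesis using atom_mem_of_lprod[OF reduced \<open>atom G z\<close>] xs by blast
  qed
  then show ?thesis using E(1) by (auto intro: finite_subset)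
qed

lemma carrier_div_closed_submonoid: "div_closed_submonoid G (carrier G)"
  by (simp add: div_closed_submonoid_def)

lemma dc_hull_subset_carrier: "a \<in> carrier G \<Longrightarrow> dc_hull G a \<subseteq> carrier G"
  using carrier_div_closed_submonoid by (auto simp: dc_hull_def)

lemma div_closed_submonoid_pow:
  "div_closed_submonoid G S \<Longrightarrow> a \<in> S \<Longrightarrow> a [^] (n::nat) \<in> S"
  by (induction n) (simp_all add: div_closed_submonoid_def)

lemma divisor_of_pow_in_dc_hull:
  assumes "b \<in> carrier G" "divides_in G b (a [^] (n::nat))"
  shows "b \<in> dc_hull G a"
  using assms div_closed_submonoid_pow unfolding dc_hull_def div_closed_submonoid_def by blast

end

context comm_monoid
begin

lemma lprod_remove1:
  "z \<in> set xs \<Longrightarrow> set xs \<subseteq> carrier G \<Longrightarrow> lprod G xs = z \<otimes> lprod G (remove1 z xs)"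
  using multlist_perm_cong[OF perm_remove] by (simp add: lprod_def)

lemma lprod_atoms_not_Units:
  assumes "xs \<noteq> []" "\<forall>z\<in>set xs. atom G z"
  shows "lprod G xs \<notin> Units G"
proof
  obtain z zs where xs: "xs = z # zs" using assms(1) by (cases xs) auto
  assume "lprod G xs \<in> Units G"
  then have "z \<in> Units G"
    using assms(2) unfolding xs by (auto intro: unit_factor lprod_closed dest: atom_in_carrier)
  then show False using assms(2) xs by (simp add: atom_def)
qed

text \<open>A product of at least two atoms is neither a unit nor an atom.\<close>
lemma Lset_ge_2:
  assumes "k \<in> Lset G a" "2 \<le> k" "n \<in> Lset G a"
  shows "2 \<le> n"
proof -
  obtain ys where ys: "2 \<le> length ys" "\<forall>u\<in>set ys. atom G u" "a = lprod G ys"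
    using assms(1,2) unfolding Lset_def by blast
  then obtain z w zs where zs: "\<forall>u\<in>set (z # w # zs). atom G u" "a = z \<otimes> lprod G (w # zs)"
    by (cases ys rule: remdups_adj.cases) auto
  have "lprod G (w # zs) \<notin> Units G" "lprod G (w # zs) \<in> carrier G"
    using zs(1) lprod_atoms_not_Units[of "w # zs"] by (auto intro!: lprod_closed dest: atom_in_carrier)
  then have a: "a \<notin> Units G" "\<not> atom G a"
    using zs lprod_atoms_not_Units[of "z # w # zs"] unfolding atom_def by auto
  obtain xs where "length xs = n" "\<forall>u\<in>set xs. atom G u" "a = lprod G xs"
    using assms(3) unfolding Lset_def by blast
  with a show ?thesis
    by (cases xs rule: remdups_adj.cases) (auto simp: atom_in_carrier)
qed

end

lemma transfer_hom_cancel: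
  assumes "group G" "D \<subseteq> carrier G" "transfer_hom H G D \<theta>"
    and "a \<in> carrier H" "b \<in> carrier H" "c \<in> carrier H" "a \<otimes>\<^bsub>H\<^esub> b = a \<otimes>\<^bsub>H\<^esub> c"
  shows "\<theta> b = \<theta> c"
proof -
  interpret group G by fact
  have hom: "\<theta> (a \<otimes>\<^bsub>H\<^esub> u) = \<theta> a \<otimes>\<^bsub>G\<^esub> \<theta> u" and "\<theta> u \<in> carrier G" if "u \<in> carrier H" for u
    using assms that unfolding transfer_hom_def by auto
  then show ?thesis using assms(4-7) by (metis l_cancel)
qed

text \<open>Lift the factorisation \<open>\<theta> q = \<theta> p \<cdot> \<theta> p\<close> to \<open>q\<close>: one lifted factor is a unit, so \<open>\<theta> p\<close>
  is invertible in \<open>D\<close>.\<close>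
lemma transfer_hom_atom_not_square:
  assumes "group G" "D \<subseteq> carrier G" "\<forall>u\<in>D. \<forall>v\<in>D. u \<otimes>\<^bsub>G\<^esub> v \<in> D"
    and T: "transfer_hom H G D \<theta>" and "atom H q" "p \<in> carrier H" "\<theta> q = \<theta> p \<otimes>\<^bsub>G\<^esub> \<theta> p"
  shows "p \<in> Units H"
proof -
  interpret group G by fact
  have into_D: "\<forall>a\<in>carrier H. \<theta> a \<in> D"
    and units: "{a \<in> carrier H. \<theta> a \<in> D_units G D} = Units H"
    and split: "\<forall>a\<in>carrier H. \<forall>\<beta>\<in>D. \<forall>\<gamma>\<in>D. \<theta> a = \<beta> \<otimes>\<^bsub>G\<^esub> \<gamma> \<longrightarrow>
        (\<exists>b\<in>carrier H. \<exists>c\<in>carrier H. a = b \<otimes>\<^bsub>H\<^esub> c \<and>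
           (\<exists>u\<in>D_units G D. \<theta> b = \<beta> \<otimes>\<^bsub>G\<^esub> u) \<and> (\<exists>u\<in>D_units G D. \<theta> c = \<gamma> \<otimes>\<^bsub>G\<^esub> u))"
    using T unfolding transfer_hom_def by blast+
  have "\<theta> p \<in> D" using into_D \<open>p \<in> carrier H\<close> by blast
  then obtain b c where "b \<in> carrier H" "c \<in> carrier H" "q = b \<otimes>\<^bsub>H\<^esub> c"
      and "\<exists>u\<in>D_units G D. \<theta> b = \<theta> p \<otimes>\<^bsub>G\<^esub> u" "\<exists>u\<in>D_units G D. \<theta> c = \<theta> p \<otimes>\<^bsub>G\<^esub> u"
    using split atom_in_carrier[OF \<open>atom H q\<close>] assms(7) by blast
  with \<open>atom H q\<close> obtain w u where w: "w \<in> Units H" and u: "u \<in> D_units G D" "\<theta> w = \<theta> p \<otimes>\<^bsub>G\<^esub> u"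
    unfolding atom_def by blast
  have "\<theta> w \<in> D_units G D" using w units by blast
  then have "inv\<^bsub>G\<^esub> (\<theta> p \<otimes>\<^bsub>G\<^esub> u) \<in> D" using u by (simp add: D_units_def)
  moreover have "u \<in> D" "u \<in> carrier G" "\<theta> p \<in> carrier G"
    using u \<open>\<theta> p \<in> D\<close> assms(2) by (auto simp: D_units_def)
  moreover have "inv\<^bsub>G\<^esub> (\<theta> p) = u \<otimes>\<^bsub>G\<^esub> inv\<^bsub>G\<^esub> (\<theta> p \<otimes>\<^bsub>G\<^esub> u)"
    using \<open>u \<in> carrier G\<close> \<open>\<theta> p \<in> carrier G\<close> by (simp add: inv_mult_group m_assoc[symmetric])
  ultimately have "inv\<^bsub>G\<^esub> (\<theta> p) \<in> D"
    using assms(3) by simp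
  then have "\<theta> p \<in> D_units G D" using \<open>\<theta> p \<in> D\<close> by (simp add: D_units_def)
  then show ?thesis using units \<open>p \<in> carrier H\<close> by blast
qed

lemma rho_atLeastAtMost:
  assumes "0 < a" "a \<le> b"
  shows "rho {a..b} = real b / real a"
proof -
  have "Max {a..b} = b" "Min {a..b} = a"
    by (auto intro!: Max_eqI Min_eqI simp: assms(2))
  then show ?thesis using assms by (auto simp: rho_def)
qed

section \<open>The monoid of monomial ideals\<close>

definition up_closed :: "'a::order set \<Rightarrow> bool" where
  "up_closed I \<longleftrightarrow> (\<forall>a\<in>I. \<forall>b. a \<le> b \<longrightarrow> b \<in> I)"

context
  fixes I J :: "'a::canonically_ordered_monoid_add set"
  assumes up: "up_closed I"
begin

lemma up_closed_set_plus: "up_closed (I + J)"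
  unfolding up_closed_def
proof (intro ballI allI impI)
  fix v w assume "v \<in> I + J" "v \<le> w"
  then obtain a b c where "a \<in> I" "b \<in> J" "w = a + b + c"
    by (auto elim!: set_plus_elim simp: le_iff_add)
  moreover have "a + c \<in> I" using up \<open>a \<in> I\<close> unfolding up_closed_def le_iff_add by blast
  ultimately show "w \<in> I + J" by (metis add.commute add.left_commute set_plus_intro)
qed

lemma set_plus_UNIV: "I + UNIV = I"
proof
  show "I + UNIV \<subseteq> I"
    using up unfolding up_closed_def by (auto elim!: set_plus_elim simp: le_iff_add)
  show "I \<subseteq> I + UNIV"
    by (metis add_0_right set_plus_intro UNIV_I subsetI)
qed

lemma up_closed_zero_mem: "0 \<in> I \<Longrightarrow> I = UNIV"
  using up unfolding up_closed_def by auto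

lemma set_plus_eq_UNIV: "I + J = UNIV \<Longrightarrow> I = UNIV"
  by (metis UNIV_I add_eq_0_iff_both_eq_0 set_plus_elim up_closed_zero_mem)

end

lemma up_closed_UNIV [simp]: "up_closed UNIV"
  by (simp add: up_closed_def)

lemma set_plus_nonempty: "I \<noteq> {} \<Longrightarrow> J \<noteq> {} \<Longrightarrow> I + J \<noteq> {}"
  by (auto intro: set_plus_intro)

lemma mem_carrier_MonR [simp]: "I \<in> carrier MonR \<longleftrightarrow> I \<noteq> {} \<and> up_closed I"
  by (simp add: MonR_def up_closed_def)

lemma mult_MonR [simp]: "I \<otimes>\<^bsub>MonR\<^esub> J = I + J"
  by (auto simp: MonR_def set_plus_def plus_fun_def)

lemma one_MonR [simp]: "\<one>\<^bsub>MonR\<^esub> = UNIV"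
  by (simp add: MonR_def)

lemma comm_monoid_MonR: "comm_monoid (MonR :: ('n::finite \<Rightarrow> nat) set monoid)"
  by (rule comm_monoidI)
    (auto simp: up_closed_set_plus set_plus_UNIV set_plus_nonempty ac_simps)

interpretation MonR: comm_monoid "MonR :: ('n::finite \<Rightarrow> nat) set monoid"
  by (fact comm_monoid_MonR)

lemma Units_MonR: "Units (MonR :: ('n::finite \<Rightarrow> nat) set monoid) = {UNIV}"
  using MonR.Units_one_closed by (auto simp: Units_def dest: set_plus_eq_UNIV)

lemma atom_MonR_iff:
  "atom MonR z \<longleftrightarrow> z \<in> carrier MonR \<and> z \<noteq> UNIV \<and>
     (\<forall>B\<in>carrier MonR. \<forall>C\<in>carrier MonR. z = B + C \<longrightarrow> B = UNIV \<or> C = UNIV)"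
  unfolding atom_def Units_MonR by simp

lemma atom_MonR_split:
  "atom MonR z \<Longrightarrow> B \<in> carrier MonR \<Longrightarrow> C \<in> carrier MonR \<Longrightarrow> z = B + C \<Longrightarrow> B = UNIV \<or> C = UNIV"
  by (simp add: atom_MonR_iff)

definition total_deg :: "('n::finite \<Rightarrow> nat) \<Rightarrow> nat" where
  "total_deg a = (\<Sum>i\<in>UNIV. a i)"

lemma total_deg_add: "total_deg (a + b) = total_deg a + total_deg b"
  by (simp add: total_deg_def sum.distrib)

lemma total_deg_pos:
  assumes "z \<in> carrier MonR" "z \<noteq> UNIV" "v \<in> z"
  shows "0 < total_deg v"
proof -
  have "v \<noteq> 0" using assms up_closed_zero_mem[of z] by auto
  then obtain i where "0 < v i" by (auto simp: fun_eq_iff)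
  then show ?thesis
    using member_le_sum[of i UNIV v] unfolding total_deg_def by simp
qed

lemma total_deg_unit_power: "total_deg ((0 :: 'n::finite \<Rightarrow> nat)(x := k)) = k"
  by (simp add: total_deg_def fun_upd_def zero_fun_def)

lemma length_le_total_deg:
  "\<forall>z\<in>set xs. z \<in> carrier MonR \<and> z \<noteq> UNIV \<Longrightarrow> v \<in> lprod MonR xs \<Longrightarrow> length xs \<le> total_deg v"
proof (induction xs arbitrary: v)
  case (Cons z xs)
  have "v \<in> z + lprod MonR xs" using Cons.prems(2) by simp
  then obtain a b where ab: "a \<in> z" "b \<in> lprod MonR xs" "v = a + b"
    by (rule set_plus_elim)
  have "0 < total_deg a" using Cons.prems(1) ab(1) total_deg_pos[of z a] by simp
  moreover have "length xs \<le> total_deg b" using Cons.IH Cons.prems(1) ab(2) by simp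
  ultimately show ?case unfolding ab(3) total_deg_add by simp
qed simp

lemma Lset_MonR_le_total_deg:
  assumes "v \<in> I" "n \<in> Lset MonR I"
  shows "n \<le> total_deg v"
proof -
  obtain xs where xs: "length xs = n" "\<forall>z\<in>set xs. atom MonR z" "I = lprod MonR xs"
    using assms(2) unfolding Lset_def by blast
  then have "\<forall>z\<in>set xs. z \<in> carrier MonR \<and> z \<noteq> UNIV"
    by (simp add: atom_MonR_iff)
  with xs assms(1) show ?thesis using length_le_total_deg[of xs v] by simp
qed

lemma Lset_MonR_nonempty:
  assumes "I \<in> carrier MonR" "v \<in> I"
  shows "Lset MonR I \<noteq> {}"
  using assms
proof (induction "total_deg v" arbitrary: I v rule: less_induct)
  case less
  consider "I = UNIV" | "atom MonR I"
    | B C where "B \<in> carrier MonR" "C \<in> carrier MonR" "B \<noteq> UNIV" "C \<noteq> UNIV" "I = B + C"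
    using less.prems unfolding atom_MonR_iff by blast
  then show ?case
  proof cases
    case 1
    then show ?thesis using MonR.Lset_one by force
  next
    case 2
    then show ?thesis using MonR.Lset_atom by blast
  next
    case 3
    then have "v \<in> B + C" using less.prems(2) by simp
    then obtain b c where "b \<in> B" "c \<in> C" "v = b + c"
      by (rule set_plus_elim)
    moreover from this 3 have "total_deg b < total_deg v" "total_deg c < total_deg v"
      using total_deg_pos[of B b] total_deg_pos[of C c] by (auto simp: total_deg_add)
    ultimately obtain m n where "m \<in> Lset MonR B" "n \<in> Lset MonR C"
      using less.hyps 3 by blast
    then show ?thesis using MonR.Lset_mult 3 by fastforce
  qed
qed

lemma BF_monoid_MonR: "BF_monoid MonR"
  unfolding BF_monoid_def
proof
  fix I :: "('n::finite \<Rightarrow> nat) set" assume I: "I \<in> carrier MonR"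
  then obtain v where "v \<in> I" by auto
  then have "Lset MonR I \<subseteq> {..total_deg v}"
    using Lset_MonR_le_total_deg by auto
  then show "finite (Lset MonR I) \<and> Lset MonR I \<noteq> {}"
    using Lset_MonR_nonempty[OF I \<open>v \<in> I\<close>] finite_subset by blast
qed

section \<open>The principal ideal of a variable\<close>

definition var_ideal :: "'n \<Rightarrow> ('n \<Rightarrow> nat) set" where
  "var_ideal x = {a. 0 < a x}"

lemma var_ideal_in_carrier: "var_ideal (x::'n::finite) \<in> carrier MonR"
proof -
  have "0(x := 1) \<in> var_ideal x" by (simp add: var_ideal_def)
  moreover have "up_closed (var_ideal x)"
    unfolding up_closed_def var_ideal_def le_fun_def by (auto intro: less_le_trans)
  ultimately show ?thesis by auto
qed

lemma var_ideal_neq_UNIV: "var_ideal x \<noteq> UNIV"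
  by (auto simp: var_ideal_def)

lemma mem_var_ideal_plus:
  assumes "up_closed W"
  shows "v \<in> var_ideal x + W \<longleftrightarrow> 0 < v x \<and> v(x := v x - 1) \<in> W"
proof
  assume "v \<in> var_ideal x + W"
  then obtain a w where "0 < a x" "w \<in> W" "v = a + w"
    by (auto simp: var_ideal_def elim: set_plus_elim)
  moreover from this have "w \<le> v(x := v x - 1)" by (auto simp: le_fun_def)
  ultimately show "0 < v x \<and> v(x := v x - 1) \<in> W"
    using assms unfolding up_closed_def by auto
next
  assume v: "0 < v x \<and> v(x := v x - 1) \<in> W"
  then have "v = 0(x := 1) + v(x := v x - 1)" by (auto simp: fun_eq_iff)
  moreover have "0(x := 1) \<in> var_ideal x" by (simp add: var_ideal_def)
  ultimately show "v \<in> var_ideal x + W" using v by (metis set_plus_intro)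
qed

lemma var_ideal_cancel:
  assumes "up_closed W1" "up_closed W2" "var_ideal x + W1 = var_ideal x + W2"
  shows "W1 = W2"
proof -
  have "w \<in> W \<longleftrightarrow> w(x := w x + 1) \<in> var_ideal x + W" if "up_closed W" for w W
    using mem_var_ideal_plus[OF that] by simp
  then show ?thesis using assms by blast
qed

lemma atom_var_ideal: "atom MonR (var_ideal (x::'n::finite))"
  unfolding atom_MonR_iff
proof (intro conjI ballI impI var_ideal_in_carrier var_ideal_neq_UNIV)
  fix B C :: "('n \<Rightarrow> nat) set"
  assume BC: "B \<in> carrier MonR" "C \<in> carrier MonR" "var_ideal x = B + C"
  have "0(x := 1) \<in> B + C" using BC(3) by (auto simp: var_ideal_def)
  then obtain b c where "b \<in> B" "c \<in> C" and bc: "0(x := 1) = b + c"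
    by (rule set_plus_elim)
  have coord: "b i + c i = (if i = x then 1 else 0)" for i
    using fun_cong[OF bc, of i] by (simp split: if_splits)
  have "b = 0 \<or> c = 0"
  proof (cases "b x = 0")
    case True
    then have "b i = 0" for i using coord[of i] by (cases "i = x") auto
    then show ?thesis by auto
  next
    case False
    then have "c i = 0" for i using coord[of i] by (cases "i = x") auto
    then show ?thesis by auto
  qed
  then show "B = UNIV \<or> C = UNIV"
    using BC \<open>b \<in> B\<close> \<open>c \<in> C\<close> up_closed_zero_mem by auto
qed

lemma var_ideal_factor:
  assumes z: "z \<noteq> {}" "up_closed z" and pos: "\<forall>w\<in>z. 0 < w x"
  shows "z = var_ideal x + {w. w(x := w x + 1) \<in> z}" "{w. w(x := w x + 1) \<in> z} \<in> carrier MonR"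
proof -
  define z' where "z' = {w. w(x := w x + 1) \<in> z}"
  have "up_closed z'"
    unfolding up_closed_def z'_def
  proof (intro ballI allI impI CollectI)
    fix a b assume "a \<in> {w. w(x := w x + 1) \<in> z}" "a \<le> b"
    moreover from \<open>a \<le> b\<close> have "a(x := a x + 1) \<le> b(x := b x + 1)" by (auto simp: le_fun_def)
    ultimately show "b(x := b x + 1) \<in> z" using z(2) unfolding up_closed_def by blast
  qed
  have iff: "v \<in> var_ideal x + z' \<longleftrightarrow> 0 < v x \<and> v(x := v x - 1 + 1) \<in> z" for v
    using mem_var_ideal_plus[OF \<open>up_closed z'\<close>, of v x] by (simp add: z'_def)
  have "v \<in> z \<longleftrightarrow> v \<in> var_ideal x + z'" for v
  proof (cases "0 < v x")
    case True
    then have "v(x := v x - 1 + 1) = v" by (simp add: fun_eq_iff)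
    then show ?thesis using iff[of v] True by simp
  next
    case False
    then have "v \<notin> z" using pos by auto
    then show ?thesis using iff[of v] False by simp
  qed
  then have "z = var_ideal x + z'" by (simp add: set_eq_iff)
  then have "z' \<noteq> {}" using z(1) by (metis sumset_empty(1))
  with \<open>up_closed z'\<close> \<open>z = var_ideal x + z'\<close> show
    "z = var_ideal x + {w. w(x := w x + 1) \<in> z}" "{w. w(x := w x + 1) \<in> z} \<in> carrier MonR"
    unfolding z'_def by simp_all
qed

lemma atom_eq_var_ideal_or_x_free:
  fixes x :: "'n::finite"
  assumes "atom MonR z"
  shows "z = var_ideal x \<or> (\<exists>w\<in>z. w x = 0)"
proof (rule disjCI)
  assume "\<not> (\<exists>w\<in>z. w x = 0)"
  then have pos: "\<forall>w\<in>z. 0 < w x" by auto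
  have "z \<noteq> {}" "up_closed z" using atom_in_carrier[OF assms] by auto
  note z' = var_ideal_factor[OF this pos]
  then have "{w. w(x := w x + 1) \<in> z} = UNIV"
    using atom_MonR_split[OF assms var_ideal_in_carrier[of x]] var_ideal_neq_UNIV[of x] by simp
  then show "z = var_ideal x"
    using z'(1) set_plus_UNIV[of "var_ideal x"] var_ideal_in_carrier[of x] by simp
qed

lemma x_free_lprod:
  "\<forall>z\<in>set xs. \<exists>w\<in>z. w x = 0 \<Longrightarrow> \<exists>w\<in>lprod MonR xs. w x = 0"
proof (induction xs)
  case Nil
  have "(0 :: 'a \<Rightarrow> nat) \<in> lprod MonR []" by simp
  then show ?case by fastforce
next
  case (Cons z xs)
  then obtain w1 w2 where "w1 \<in> z" "w1 x = 0" "w2 \<in> lprod MonR xs" "w2 x = 0" by auto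
  then have "w1 + w2 \<in> lprod MonR (z # xs)" "(w1 + w2) x = 0" by (auto intro: set_plus_intro)
  then show ?case by blast
qed

lemma var_ideal_in_factorisation:
  assumes atoms: "\<forall>z\<in>set xs. atom MonR z" and I: "up_closed I" "var_ideal x + I = lprod MonR xs"
  shows "var_ideal x \<in> set xs"
proof (rule ccontr)
  assume "var_ideal x \<notin> set xs"
  have "\<exists>w\<in>z. w x = 0" if "z \<in> set xs" for z
    using that atoms atom_eq_var_ideal_or_x_free[of z x] \<open>var_ideal x \<notin> set xs\<close> by auto
  then have "\<exists>w\<in>lprod MonR xs. w x = 0" by (intro x_free_lprod) simp
  then obtain w where "w \<in> var_ideal x + I" "w x = 0" unfolding I(2) by auto
  then show False using mem_var_ideal_plus[OF I(1), of w x] by simp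
qed

lemma Lset_var_ideal_mult:
  fixes I :: "('n::finite \<Rightarrow> nat) set"
  assumes I: "I \<in> carrier MonR"
  shows "Lset MonR (var_ideal x + I) = Suc ` Lset MonR I"
proof
  show "Suc ` Lset MonR I \<subseteq> Lset MonR (var_ideal x + I)"
  proof
    fix k assume "k \<in> Suc ` Lset MonR I"
    then obtain n where "n \<in> Lset MonR I" "k = Suc n" by blast
    then have "1 + n \<in> Lset MonR (var_ideal x \<otimes>\<^bsub>MonR\<^esub> I)"
      using MonR.Lset_mult[OF MonR.Lset_atom[OF atom_var_ideal[of x]]] by blast
    then show "k \<in> Lset MonR (var_ideal x + I)" using \<open>k = Suc n\<close> by simp
  qed
next
  show "Lset MonR (var_ideal x + I) \<subseteq> Suc ` Lset MonR I"
  proof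
    fix n assume "n \<in> Lset MonR (var_ideal x + I)"
    then obtain xs where xs: "length xs = n" "\<forall>z\<in>set xs. atom MonR z" "var_ideal x + I = lprod MonR xs"
      unfolding Lset_def by blast
    have carrier: "set xs \<subseteq> carrier MonR" using xs(2) by (auto dest: atom_in_carrier)
    have X: "var_ideal x \<in> set xs"
      using var_ideal_in_factorisation[OF xs(2) _ xs(3)] I by simp
    define ys where "ys = remove1 (var_ideal x) xs"
    have ys: "set ys \<subseteq> set xs" unfolding ys_def by (rule set_remove1_subset)
    have "var_ideal x + I = var_ideal x + lprod MonR ys"
      using MonR.lprod_remove1[OF X carrier] xs(3) unfolding ys_def by simp
    moreover have "set ys \<subseteq> carrier MonR" using ys carrier by auto
    then have "up_closed (lprod MonR ys)" using MonR.lprod_closed[of ys] by simp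
    ultimately have "I = lprod MonR ys"
      using I var_ideal_cancel[of I "lprod MonR ys" x] by simp
    moreover have "\<forall>z\<in>set ys. atom MonR z" using xs(2) ys by auto
    ultimately have "length ys \<in> Lset MonR I" unfolding Lset_def by (intro CollectI exI[of _ ys]) simp
    moreover have "n = Suc (length ys)"
      using xs(1) length_pos_if_in_set[OF X] X unfolding ys_def by (simp add: length_remove1)
    ultimately show "n \<in> Suc ` Lset MonR I" by simp
  qed
qed

lemma Lset_var_ideal_pow_mult:
  fixes I :: "('n::finite \<Rightarrow> nat) set"
  assumes I: "I \<in> carrier MonR"
  shows "Lset MonR (var_ideal x [^]\<^bsub>MonR\<^esub> t \<otimes>\<^bsub>MonR\<^esub> I) = (+) t ` Lset MonR I"
proof (induction t)
  case 0
  have "UNIV + I = I" using I set_plus_UNIV[of I] by (simp add: add.commute)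
  then show ?case by simp
next
  case (Suc t)
  let ?J = "var_ideal x [^]\<^bsub>MonR\<^esub> t \<otimes>\<^bsub>MonR\<^esub> I"
  have "?J \<in> carrier MonR" using I var_ideal_in_carrier[of x] by (intro MonR.m_closed MonR.nat_pow_closed)
  moreover have "var_ideal x [^]\<^bsub>MonR\<^esub> Suc t \<otimes>\<^bsub>MonR\<^esub> I = var_ideal x + ?J"
    by (simp add: ac_simps)
  ultimately show ?case using Suc Lset_var_ideal_mult[of ?J x] by (simp add: image_image)
qed

section \<open>Monomial ideals in two variables\<close>

text \<open>The ideal generated by the monomials \<open>X\<^sup>i Y\<^sup>e\<^sup>-\<^sup>i\<close> with \<open>i \<in> S\<close>.\<close>
definition XY_monomial_ideal :: "'n \<Rightarrow> 'n \<Rightarrow> nat \<Rightarrow> nat set \<Rightarrow> ('n \<Rightarrow> nat) set" where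
  "XY_monomial_ideal x y e S = {a. \<exists>i\<in>S. i \<le> a x \<and> e - i \<le> a y}"

definition XY_power :: "'n \<Rightarrow> 'n \<Rightarrow> nat \<Rightarrow> ('n \<Rightarrow> nat) set" where
  "XY_power x y m = {a. m \<le> a x + a y}"

text \<open>The \<open>X\<close>-exponents of an atom \<open>F\<close> of degree \<open>e\<close> with \<open>(X,Y) F = (X,Y)\<^sup>e\<^sup>+\<^sup>1\<close>.
  The even exponents and their successors cover \<open>[0, e + 1]\<close>; the exponent \<open>e\<close> (for odd \<open>e\<close>) and
  the exponent \<open>1\<close> (for even \<open>e \<ge> 4\<close>) are added so that \<open>F\<close> does not split.\<close>
definition cofactor_exponents :: "nat \<Rightarrow> nat set" where
  "cofactor_exponents e = {i. i \<le> e \<and> (even i \<or> i = 1 \<and> even e \<and> 4 \<le> e \<or> i = e \<and> odd e)}"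

context
  fixes x y :: "'n::finite"
  assumes x_neq_y: "x \<noteq> y"
begin

lemma plus_eq_monomial:
  fixes b c :: "'n \<Rightarrow> nat"
  assumes "b + c = 0(x := i, y := j)"
  shows "b = 0(x := b x, y := b y)" "c = 0(x := c x, y := c y)" "b x + c x = i" "b y + c y = j"
proof -
  have coord: "b z + c z = (0(x := i, y := j)) z" for z
    using fun_cong[OF assms, of z] by simp
  have "b z = 0 \<and> c z = 0" if "z \<noteq> x" "z \<noteq> y" for z
    using coord[of z] that by simp
  then show "b = 0(x := b x, y := b y)" "c = 0(x := c x, y := c y)"
    by (auto simp: fun_eq_iff)
  show "b x + c x = i" "b y + c y = j"
    using coord[of x] coord[of y] x_neq_y by simp_all
qed

lemma XY_monomial_ideal_in_carrier:
  assumes "S \<noteq> {}"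
  shows "XY_monomial_ideal x y e S \<in> carrier MonR"
proof -
  obtain i where "i \<in> S" using assms by blast
  then have "0(x := i, y := e - i) \<in> XY_monomial_ideal x y e S"
    using x_neq_y by (auto simp: XY_monomial_ideal_def)
  moreover have "up_closed (XY_monomial_ideal x y e S)"
    unfolding up_closed_def XY_monomial_ideal_def le_fun_def
    by (auto intro: order_trans)
  ultimately show ?thesis by auto
qed

lemma XY_monomial_ideal_neq_UNIV:
  assumes "0 < e"
  shows "XY_monomial_ideal x y e S \<noteq> UNIV"
proof -
  have "0 \<notin> XY_monomial_ideal x y e S" using assms by (auto simp: XY_monomial_ideal_def)
  then show ?thesis by auto
qed

lemma XY_monomial_ideal_degree:
  "v \<in> XY_monomial_ideal x y e S \<Longrightarrow> S \<subseteq> {..e} \<Longrightarrow> e \<le> v x + v y"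
  by (auto simp: XY_monomial_ideal_def)

lemma XY_monomial_ideal_exponent:
  assumes "v \<in> XY_monomial_ideal x y e S" "S \<subseteq> {..e}" "v x + v y = e"
  shows "v x \<in> S"
proof -
  obtain i where "i \<in> S" "i \<le> v x" "e - i \<le> v y"
    using assms(1) by (auto simp: XY_monomial_ideal_def)
  moreover from this have "i \<le> e" using assms(2) by auto
  ultimately have "v x = i" using assms(3) by linarith
  then show ?thesis using \<open>i \<in> S\<close> by simp
qed

lemma XY_monomial_ideal_plus_degree:
  assumes "S \<subseteq> {..e}" "XY_monomial_ideal x y e S = B + C" "p \<in> B" "q \<in> C"
  shows "e \<le> p x + q x + p y + q y"
proof -
  have "p + q \<in> XY_monomial_ideal x y e S" unfolding assms(2) using assms(3,4) by (rule set_plus_intro)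
  then show ?thesis using XY_monomial_ideal_degree[OF _ assms(1)] by fastforce
qed

lemma XY_monomial_ideal_plus_exponent:
  assumes "S \<subseteq> {..e}" "XY_monomial_ideal x y e S = B + C" "p \<in> B" "q \<in> C"
    and "p x + q x + p y + q y = e"
  shows "p x + q x \<in> S"
proof -
  have "p + q \<in> XY_monomial_ideal x y e S" unfolding assms(2) using assms(3,4) by (rule set_plus_intro)
  then show ?thesis using XY_monomial_ideal_exponent[OF _ assms(1)] assms(5) by fastforce
qed

text \<open>\<open>u\<close> and \<open>v\<close> are the \<open>(X,Y)\<close>-degrees of the two factors of \<open>Y\<^sup>e\<close>.\<close>
lemma XY_monomial_ideal_factor_degrees:
  assumes S: "S \<subseteq> {..e}" "0 \<in> S" and I: "XY_monomial_ideal x y e S = B + C"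
  obtains u v where "u + v = e" "0(y := u) \<in> B" "0(y := v) \<in> C"
    "\<And>p. p \<in> B \<Longrightarrow> u \<le> p x + p y" "\<And>q. q \<in> C \<Longrightarrow> v \<le> q x + q y"
proof -
  have "0(x := 0, y := e) \<in> B + C"
    using S(2) x_neq_y unfolding I[symmetric] by (auto simp: XY_monomial_ideal_def)
  then obtain b c where bc: "b \<in> B" "c \<in> C" "0(x := 0, y := e) = b + c"
    by (rule set_plus_elim)
  note m = plus_eq_monomial[OF bc(3)[symmetric]]
  have "b x = 0" "c x = 0" using m(3) by simp_all
  have "b = 0(y := b y)"
    by (subst m(1)) (simp add: \<open>b x = 0\<close> fun_eq_iff)
  moreover have "c = 0(y := c y)"
    by (subst m(2)) (simp add: \<open>c x = 0\<close> fun_eq_iff)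
  moreover have "b y \<le> p x + p y" if "p \<in> B" for p
    using XY_monomial_ideal_plus_degree[OF S(1) I that bc(2)] m(4) \<open>c x = 0\<close> by simp
  moreover have "c y \<le> q x + q y" if "q \<in> C" for q
    using XY_monomial_ideal_plus_degree[OF S(1) I bc(1) that] m(4) \<open>b x = 0\<close> by simp
  ultimately show ?thesis
    using that[of "b y" "c y"] bc(1,2) m(4) by simp
qed

lemma XY_monomial_ideal_generator_split:
  assumes S: "S \<subseteq> {..e}" "i \<in> S" and I: "XY_monomial_ideal x y e S = B + C"
    and low: "u + v = e" "\<And>p. p \<in> B \<Longrightarrow> u \<le> p x + p y" "\<And>q. q \<in> C \<Longrightarrow> v \<le> q x + q y"
  obtains b c where "b \<in> B" "c \<in> C" "b x + c x = i" "b x + b y = u" "c x + c y = v"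
proof -
  have "0(x := i, y := e - i) \<in> B + C"
    using S(2) x_neq_y unfolding I[symmetric] by (auto simp: XY_monomial_ideal_def)
  then obtain b c where bc: "b \<in> B" "c \<in> C" "0(x := i, y := e - i) = b + c"
    by (rule set_plus_elim)
  note m = plus_eq_monomial(3,4)[OF bc(3)[symmetric]]
  have "i \<le> e" using S by auto
  then have "b x + b y = u" "c x + c y = v"
    using m low(1) low(2)[OF bc(1)] low(3)[OF bc(2)] by linarith+
  then show ?thesis using that bc(1,2) m(1) by blast
qed

text \<open>Only generators \<open>X\<^sup>i Y\<^sup>e\<^sup>-\<^sup>i\<close> with \<open>i \<in> S\<close> have degree \<open>e\<close> in \<open>I\<close>; the factors of \<open>X\<^sup>e\<close>, \<open>Y\<^sup>e\<close>
  and \<open>X Y\<^sup>e\<^sup>-\<^sup>1\<close> recombine to such generators.\<close>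
lemma XY_monomial_ideal_factorE:
  assumes S: "S \<subseteq> {..e}" "0 \<in> S" "e \<in> S"
    and BC: "B \<in> carrier MonR" "C \<in> carrier MonR" "B \<noteq> UNIV" "C \<noteq> UNIV"
    and I: "XY_monomial_ideal x y e S = B + C"
  obtains u v where "0 < u" "0 < v" "u + v = e" "u \<in> S" "v \<in> S" "1 \<in> S \<Longrightarrow> Suc u \<in> S \<or> Suc v \<in> S"
proof -
  obtain u v where uv: "u + v = e" "0(y := u) \<in> B" "0(y := v) \<in> C"
    and low: "\<And>p. p \<in> B \<Longrightarrow> u \<le> p x + p y" "\<And>q. q \<in> C \<Longrightarrow> v \<le> q x + q y"
    using XY_monomial_ideal_factor_degrees[OF S(1,2) I] by blast
  note split = XY_monomial_ideal_generator_split[OF S(1) _ I uv(1) low]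
  note exponent = XY_monomial_ideal_plus_exponent[OF S(1) I]
  have pos: "0 < k" if "0(y := k) \<in> A" "A \<in> carrier MonR" "A \<noteq> UNIV" for k and A :: "('n \<Rightarrow> nat) set"
  proof (rule ccontr)
    assume "\<not> 0 < k"
    then have "0 \<in> A" using that(1) by (simp add: fun_upd_idem)
    then show False using that(2,3) up_closed_zero_mem[of A] by simp
  qed
  have "0 < u" "0 < v" using pos[OF uv(2) BC(1,3)] pos[OF uv(3) BC(2,4)] .
  obtain b1 c1 where b1c1: "b1 \<in> B" "c1 \<in> C" "b1 x + c1 x = e" "b1 x + b1 y = u" "c1 x + c1 y = v"
    using split[OF S(3)] by blast
  then have b1c1: "b1 \<in> B" "c1 \<in> C" "b1 x = u" "b1 y = 0" "c1 x = v" "c1 y = 0"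
    using uv(1) by linarith+
  have "u \<in> S" using exponent[OF b1c1(1) uv(3)] b1c1 uv(1) x_neq_y by simp
  have "v \<in> S" using exponent[OF uv(2) b1c1(2)] b1c1 uv(1) x_neq_y by simp
  have "Suc u \<in> S \<or> Suc v \<in> S" if one: "1 \<in> S"
  proof -
    obtain b2 c2 where b2c2: "b2 \<in> B" "c2 \<in> C" "b2 x + c2 x = 1" "b2 x + b2 y = u" "c2 x + c2 y = v"
      using split[OF one] by blast
    show ?thesis
    proof (cases "b2 x = 1")
      case True
      then have "Suc v \<in> S" using exponent[OF b2c2(1) b1c1(2)] b2c2 b1c1 uv(1) by simp
      then show ?thesis ..
    next
      case False
      then have "c2 x = 1" using b2c2(3) by linarith
      then have "Suc u \<in> S" using exponent[OF b1c1(1) b2c2(2)] b2c2 b1c1 uv(1) by simp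
      then show ?thesis ..
    qed
  qed
  with \<open>0 < u\<close> \<open>0 < v\<close> uv(1) \<open>u \<in> S\<close> \<open>v \<in> S\<close> show ?thesis by (rule that)
qed

lemma atom_XY_monomial_ideal:
  assumes S: "S \<subseteq> {..e}" "0 \<in> S" "e \<in> S" "0 < e"
    and no_split: "\<And>u v. 0 < u \<Longrightarrow> 0 < v \<Longrightarrow> u + v = e \<Longrightarrow> u \<in> S \<Longrightarrow> v \<in> S \<Longrightarrow>
      1 \<in> S \<and> Suc u \<notin> S \<and> Suc v \<notin> S"
  shows "atom MonR (XY_monomial_ideal x y e S)"
  unfolding atom_MonR_iff
proof (intro conjI ballI impI)
  show "XY_monomial_ideal x y e S \<in> carrier MonR"
    using XY_monomial_ideal_in_carrier S(2) by blast
  show "XY_monomial_ideal x y e S \<noteq> UNIV"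
    using XY_monomial_ideal_neq_UNIV[OF S(4)] .
  fix B C assume "B \<in> carrier MonR" "C \<in> carrier MonR" "XY_monomial_ideal x y e S = B + C"
  then show "B = UNIV \<or> C = UNIV"
    using XY_monomial_ideal_factorE[OF S(1-3)] no_split by metis
qed

lemma XY_monomial_ideal_plus:
  assumes SA: "SA \<subseteq> {..d}" and SB: "SB \<subseteq> {..e}" and cover: "{..d + e} \<subseteq> SA + SB"
  shows "XY_monomial_ideal x y d SA + XY_monomial_ideal x y e SB = XY_power x y (d + e)"
proof (intro equalityI subsetI)
  fix w assume "w \<in> XY_monomial_ideal x y d SA + XY_monomial_ideal x y e SB"
  then obtain a b where "a \<in> XY_monomial_ideal x y d SA" "b \<in> XY_monomial_ideal x y e SB" "w = a + b"
    by (rule set_plus_elim)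
  then show "w \<in> XY_power x y (d + e)"
    using XY_monomial_ideal_degree[OF _ SA, of a] XY_monomial_ideal_degree[OF _ SB, of b]
    by (simp add: XY_power_def)
next
  fix v assume "v \<in> XY_power x y (d + e)"
  then have v: "d + e \<le> v x + v y" by (simp add: XY_power_def)
  define t where "t = min (v x) (d + e)"
  have "t \<in> SA + SB" using cover unfolding t_def by auto
  then obtain i j where ij: "i \<in> SA" "j \<in> SB" "t = i + j" by (rule set_plus_elim)
  have "i \<le> d" "j \<le> e" using ij SA SB by auto
  define a where "a = 0(x := i, y := d - i)"
  have "a \<le> v"
    unfolding le_fun_def a_def using v \<open>i \<le> d\<close> \<open>j \<le> e\<close> ij(3) x_neq_y by (auto simp: t_def)
  then obtain c where c: "v = a + c" by (auto simp: le_iff_add)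
  have "a \<in> XY_monomial_ideal x y d SA"
    using ij(1) x_neq_y by (auto simp: XY_monomial_ideal_def a_def)
  moreover have "c \<in> XY_monomial_ideal x y e SB"
  proof -
    have "v x = i + c x" "v y = d - i + c y" using c x_neq_y by (simp_all add: a_def)
    then have "j \<le> c x \<and> e - j \<le> c y"
      using v ij(3) \<open>i \<le> d\<close> \<open>j \<le> e\<close> unfolding t_def by linarith
    then show ?thesis using ij(2) by (auto simp: XY_monomial_ideal_def)
  qed
  ultimately show "v \<in> XY_monomial_ideal x y d SA + XY_monomial_ideal x y e SB"
    unfolding c by (rule set_plus_intro)
qed

lemma XY_power_eq_XY_monomial_ideal: "XY_power x y m = XY_monomial_ideal x y m {..m}"
proof (intro equalityI subsetI)
  fix v assume "v \<in> XY_power x y m"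
  then have "min (v x) m \<le> v x \<and> m - min (v x) m \<le> v y" by (simp add: XY_power_def)
  then show "v \<in> XY_monomial_ideal x y m {..m}" unfolding XY_monomial_ideal_def by fastforce
qed (auto simp: XY_power_def dest: XY_monomial_ideal_degree)

lemma XY_power_plus: "XY_power x y m + XY_power x y n = XY_power x y (m + n)"
proof -
  have "{..m + n} \<subseteq> {..m} + {..n}"
  proof
    fix t assume "t \<in> {..m + n}"
    then have "t = min t m + (t - min t m)" "min t m \<in> {..m}" "t - min t m \<in> {..n}" by auto
    then show "t \<in> {..m} + {..n}" by (metis set_plus_intro)
  qed
  then have "XY_monomial_ideal x y m {..m} + XY_monomial_ideal x y n {..n} = XY_power x y (m + n)"
    by (intro XY_monomial_ideal_plus) auto
  then show ?thesis
    by (simp only: XY_power_eq_XY_monomial_ideal[of m] XY_power_eq_XY_monomial_ideal[of n])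
qed

lemma XY_power_in_carrier: "XY_power x y m \<in> carrier MonR"
  unfolding XY_power_eq_XY_monomial_ideal by (rule XY_monomial_ideal_in_carrier) auto

lemma XY_ideal_eq_XY_power: "XY_ideal x y = XY_power x y 1"
  by (auto simp: XY_ideal_def XY_power_def)

lemma XY_ideal_pow: "XY_ideal x y [^]\<^bsub>MonR\<^esub> k = XY_power x y k"
proof (induction k)
  case 0
  then show ?case by (simp add: XY_power_def)
next
  case (Suc k)
  then show ?case using XY_power_plus[of k 1] by (simp add: XY_ideal_eq_XY_power)
qed

lemma atom_XY_ideal: "atom MonR (XY_ideal x y)"
  unfolding XY_ideal_eq_XY_power XY_power_eq_XY_monomial_ideal
  by (rule atom_XY_monomial_ideal) auto

lemma atom_XY_cofactor: "0 < e \<Longrightarrow> atom MonR (XY_monomial_ideal x y e (cofactor_exponents e))"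
  by (rule atom_XY_monomial_ideal) (auto simp: cofactor_exponents_def, presburger+)

lemma XY_ideal_plus_XY_cofactor:
  "XY_ideal x y + XY_monomial_ideal x y e (cofactor_exponents e) = XY_power x y (Suc e)"
proof -
  have "{..1 + e} \<subseteq> {..1} + cofactor_exponents e"
  proof
    fix t assume t: "t \<in> {..1 + e}"
    show "t \<in> {..1} + cofactor_exponents e"
    proof (cases "even t \<and> t \<le> e")
      case True
      then have "t = 0 + t" "t \<in> cofactor_exponents e" by (auto simp: cofactor_exponents_def)
      then show ?thesis by (metis atMost_iff set_plus_intro zero_le)
    next
      case False
      with t have "t = 1 + (t - 1)" "t - 1 \<in> cofactor_exponents e"
        by (auto simp: cofactor_exponents_def) presburger+
      then show ?thesis by (metis atMost_iff set_plus_intro order_refl)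
    qed
  qed
  then show ?thesis
    unfolding XY_ideal_eq_XY_power XY_power_eq_XY_monomial_ideal[of 1]
    by (subst XY_monomial_ideal_plus) (auto simp: cofactor_exponents_def)
qed

lemma Lset_XY_power:
  assumes "2 \<le> k"
  shows "Lset MonR (XY_power x y k) = {2..k}"
proof -
  have lengths: "n \<in> Lset MonR (XY_power x y k)" if "n \<in> {2..k}" for n
  proof -
    define e where "e = k + 1 - n"
    have L: "1 \<in> Lset MonR (XY_ideal x y)" "1 \<in> Lset MonR (XY_monomial_ideal x y e (cofactor_exponents e))"
      "n - 2 \<in> Lset MonR (XY_power x y (n - 2))"
      using MonR.Lset_atom[OF atom_XY_ideal] MonR.Lset_atom[OF atom_XY_cofactor[of e]]
        MonR.Lset_pow_atom[OF atom_XY_ideal, of "n - 2"] that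
      by (simp_all add: XY_ideal_pow e_def)
    have "1 + 1 + (n - 2) \<in> Lset MonR (XY_ideal x y + XY_monomial_ideal x y e (cofactor_exponents e) + XY_power x y (n - 2))"
      using MonR.Lset_mult[OF MonR.Lset_mult[OF L(1,2)] L(3)] by simp
    moreover have "XY_ideal x y + XY_monomial_ideal x y e (cofactor_exponents e) + XY_power x y (n - 2) = XY_power x y k"
      using that XY_ideal_plus_XY_cofactor[of e] XY_power_plus[of "Suc e" "n - 2"]
      unfolding e_def by simp
    moreover have "1 + 1 + (n - 2) = n" using that by auto
    ultimately show ?thesis by simp
  qed
  have "0(x := k) \<in> XY_power x y k" using x_neq_y by (simp add: XY_power_def)
  have "n \<in> {2..k}" if "n \<in> Lset MonR (XY_power x y k)" for n
  proof (intro atLeastAtMost_iff[THEN iffD2] conjI)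
    show "2 \<le> n" using MonR.Lset_ge_2[OF lengths[of 2] _ that] assms by simp
    have "n \<le> total_deg (0(x := k))"
      by (rule Lset_MonR_le_total_deg[OF \<open>0(x := k) \<in> XY_power x y k\<close> that])
    then show "n \<le> k" by (simp only: total_deg_unit_power)
  qed
  with lengths show ?thesis by blast
qed

lemma atom_XY_pure_power: "0 < d \<Longrightarrow> atom MonR (XY_monomial_ideal x y d {0, d})"
  by (rule atom_XY_monomial_ideal) auto

lemma XY_pure_power_plus:
  assumes "0 < d"
  shows "XY_monomial_ideal x y d {0, d} + XY_power x y (d - 1) = XY_power x y (2 * d - 1)"
proof -
  have "{..d + (d - 1)} \<subseteq> {0, d} + {..d - 1}"
  proof
    fix t assume "t \<in> {..d + (d - 1)}"
    then have "t = (if t < d then 0 else d) + (if t < d then t else t - d)"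
      "(if t < d then t else t - d) \<in> {..d - 1}" by auto
    then show "t \<in> {0, d} + {..d - 1}" by (metis insert_iff set_plus_intro)
  qed
  then have "XY_monomial_ideal x y d {0, d} + XY_monomial_ideal x y (d - 1) {..d - 1} = XY_power x y (d + (d - 1))"
    by (intro XY_monomial_ideal_plus) auto
  moreover have "d + (d - 1) = 2 * d - 1" using assms by simp
  ultimately show ?thesis by (subst XY_power_eq_XY_monomial_ideal[of "d - 1"]) simp
qed

lemma inj_on_XY_pure_power: "inj_on (\<lambda>d. XY_monomial_ideal x y d {0, d}) {0<..}"
proof (rule inj_onI)
  fix d d' :: nat assume "d \<in> {0<..}" "d' \<in> {0<..}"
    and eq: "XY_monomial_ideal x y d {0, d} = XY_monomial_ideal x y d' {0, d'}"
  have "0(x := d) \<in> XY_monomial_ideal x y d {0, d}" "0(x := d') \<in> XY_monomial_ideal x y d' {0, d'}"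
    using x_neq_y by (auto simp: XY_monomial_ideal_def)
  then have "0(x := d) \<in> XY_monomial_ideal x y d' {0, d'}" "0(x := d') \<in> XY_monomial_ideal x y d {0, d}"
    using eq by simp_all
  then show "d = d'"
    using \<open>d \<in> {0<..}\<close> \<open>d' \<in> {0<..}\<close> x_neq_y by (auto simp: XY_monomial_ideal_def)
qed

text \<open>The atoms \<open>(X\<^sup>d, Y\<^sup>d)\<close> all divide powers of \<open>(X,Y)\<close>.\<close>
lemma infinite_atoms_dc_hull_XY_ideal:
  "infinite {z \<in> dc_hull MonR (XY_ideal x y). atom MonR z}"
proof -
  have "XY_monomial_ideal x y d {0, d} \<in> {z \<in> dc_hull MonR (XY_ideal x y). atom MonR z}" if "0 < d" for d
  proof -
    have "divides_in MonR (XY_monomial_ideal x y d {0, d}) (XY_ideal x y [^]\<^bsub>MonR\<^esub> (2 * d - 1))"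
      unfolding divides_in_def XY_ideal_pow
      using XY_pure_power_plus[OF that] XY_power_in_carrier by auto
    then show ?thesis
      using MonR.divisor_of_pow_in_dc_hull[OF atom_in_carrier[OF atom_XY_pure_power[OF that]]]
        atom_XY_pure_power[OF that] by simp
  qed
  then have "(\<lambda>d. XY_monomial_ideal x y d {0, d}) ` {0<..} \<subseteq> {z \<in> dc_hull MonR (XY_ideal x y). atom MonR z}"
    by auto
  moreover have "infinite ((\<lambda>d. XY_monomial_ideal x y d {0, d}) ` {0<..})"
    using finite_imageD[OF _ inj_on_XY_pure_power] infinite_Ioi[of "0::nat"] by auto
  ultimately show ?thesis using finite_subset by auto
qed

lemma not_locally_fg_MonR: "\<not> locally_fg (MonR :: ('n \<Rightarrow> nat) set monoid)"
proof
  have XY: "XY_ideal x y \<in> carrier MonR"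
    using XY_power_in_carrier by (simp add: XY_ideal_eq_XY_power)
  assume "locally_fg (MonR :: ('n \<Rightarrow> nat) set monoid)"
  then have "fg_up_to_units MonR (dc_hull MonR (XY_ideal x y))"
    using XY unfolding locally_fg_def by blast
  then have "finite {z \<in> dc_hull MonR (XY_ideal x y). atom MonR z}"
    using MonR.finite_atoms_if_fg_up_to_units MonR.dc_hull_subset_carrier[OF XY] Units_MonR by simp
  then show False using infinite_atoms_dc_hull_XY_ideal by simp
qed

text \<open>\<open>(X,Y) (X,Y)\<^sup>2 = (X,Y) (X\<^sup>2,Y\<^sup>2)\<close> with the atom \<open>(X\<^sup>2,Y\<^sup>2)\<close>: cancelling \<open>(X,Y)\<close> in the image
  would make \<open>(X,Y)\<close> a unit.\<close>
lemma not_transfer_Krull_MonR: "\<not> transfer_Krull (MonR :: ('n \<Rightarrow> nat) set monoid) TYPE('g)"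
proof
  assume "transfer_Krull (MonR :: ('n \<Rightarrow> nat) set monoid) TYPE('g)"
  then obtain G :: "'g monoid" and D \<theta>
    where "Krull_in G D" and T: "transfer_hom (MonR :: ('n \<Rightarrow> nat) set monoid) G D \<theta>"
    unfolding transfer_Krull_def by blast
  then have G: "group G" "D \<subseteq> carrier G" "\<forall>u\<in>D. \<forall>v\<in>D. u \<otimes>\<^bsub>G\<^esub> v \<in> D"
    unfolding Krull_in_def by (auto intro: comm_group.axioms(2))
  define P Q where "P = XY_ideal x y" and "Q = XY_monomial_ideal x y 2 {0, 2}"
  have PQ: "atom MonR P" "atom MonR Q"
    unfolding P_def Q_def using atom_XY_ideal atom_XY_pure_power[of 2] by simp_all
  then have "P \<in> carrier MonR" "Q \<in> carrier MonR" by (auto dest: atom_in_carrier)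
  then have carrier: "P \<in> carrier MonR" "Q \<in> carrier MonR" "P \<otimes>\<^bsub>MonR\<^esub> P \<in> carrier MonR"
    using MonR.m_closed by blast+
  have "P \<otimes>\<^bsub>MonR\<^esub> (P \<otimes>\<^bsub>MonR\<^esub> P) = P \<otimes>\<^bsub>MonR\<^esub> Q"
    using XY_pure_power_plus[of 2] XY_power_plus[of 1 1] XY_power_plus[of 1 2]
    unfolding P_def Q_def XY_ideal_eq_XY_power by (simp add: add.commute numeral_2_eq_2 numeral_3_eq_3)
  then have "\<theta> (P \<otimes>\<^bsub>MonR\<^esub> P) = \<theta> Q"
    using transfer_hom_cancel[OF G(1,2) T] carrier by blast
  then have "\<theta> Q = \<theta> P \<otimes>\<^bsub>G\<^esub> \<theta> P"
    using T carrier unfolding transfer_hom_def by metis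
  then have "P \<in> Units MonR"
    using transfer_hom_atom_not_square[OF G T PQ(2) carrier(1)] by simp
  then show False using PQ(1) by (simp add: atom_def)
qed

lemma Uk_MonR: "2 \<le> k \<Longrightarrow> Uk (MonR :: ('n \<Rightarrow> nat) set monoid) k = {2..}"
proof (intro equalityI subsetI)
  fix n assume "2 \<le> k" "n \<in> Uk (MonR :: ('n \<Rightarrow> nat) set monoid) k"
  then obtain a :: "('n \<Rightarrow> nat) set" where "k \<in> Lset MonR a" "n \<in> Lset MonR a"
    unfolding Uk_def LL_def by blast
  then show "n \<in> {2..}" using MonR.Lset_ge_2 \<open>2 \<le> k\<close> by simp
next
  fix n :: nat assume "2 \<le> k" "n \<in> {2..}"
  then have "k \<in> Lset MonR (XY_power x y (max n k))" "n \<in> Lset MonR (XY_power x y (max n k))"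
    using Lset_XY_power[of "max n k"] by auto
  then show "n \<in> Uk (MonR :: ('n \<Rightarrow> nat) set monoid) k"
    using XY_power_in_carrier unfolding Uk_def LL_def by blast
qed

text \<open>Multiplying \<open>(X,Y)\<^sup>k\<close> by \<open>X\<^sup>t\<close> shifts its length set \<open>[2,k]\<close> by \<open>t\<close>.\<close>
lemma atLeastAtMost_in_LL_MonR:
  assumes "2 \<le> a" "a \<le> b"
  shows "{a..b} \<in> LL (MonR :: ('n \<Rightarrow> nat) set monoid)"
proof -
  let ?I = "var_ideal x [^]\<^bsub>MonR\<^esub> (a - 2) \<otimes>\<^bsub>MonR\<^esub> XY_power x y (b + 2 - a)"
  have "Lset MonR ?I = (+) (a - 2) ` {2..b + 2 - a}"
    using Lset_var_ideal_pow_mult[OF XY_power_in_carrier] Lset_XY_power assms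
    by simp
  also have "\<dots> = {a..b}"
    using assms by (subst image_add_atLeastAtMost) simp
  finally show ?thesis
    using XY_power_in_carrier var_ideal_in_carrier unfolding LL_def
    by (metis MonR.m_closed MonR.nat_pow_closed image_eqI)
qed

lemma fully_elastic_MonR: "fully_elastic (MonR :: ('n \<Rightarrow> nat) set monoid)"
  unfolding fully_elastic_def
proof (intro allI impI)
  fix q :: rat assume "1 < q \<and> ereal (of_rat q) < rho_monoid (MonR :: ('n \<Rightarrow> nat) set monoid)"
  then have "1 < q" by simp
  obtain p r where pr: "quotient_of q = (p, r)" by (cases "quotient_of q")
  then have "0 < r" "q = of_int p / of_int r"
    using quotient_of_denom_pos quotient_of_div by blast+
  with \<open>1 < q\<close> have "r < p" by (simp add: field_simps)
  have "{2 * nat r..2 * nat p} \<in> LL (MonR :: ('n \<Rightarrow> nat) set monoid)"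
    using \<open>0 < r\<close> \<open>r < p\<close> by (intro atLeastAtMost_in_LL_MonR) auto
  moreover have "rho {2 * nat r..2 * nat p} = of_rat q"
    using \<open>0 < r\<close> \<open>r < p\<close> \<open>q = of_int p / of_int r\<close>
    by (simp add: rho_atLeastAtMost of_rat_divide)
  ultimately show "\<exists>L\<in>LL (MonR :: ('n \<Rightarrow> nat) set monoid). rho L = of_rat q" by blast
qed

end

theorem theorem4p5:
  fixes x y :: "'n::finite"
  assumes "x \<noteq> y"
  shows "BF_monoid (MonR :: ('n \<Rightarrow> nat) set monoid) \<and>
         \<not> locally_fg (MonR :: ('n \<Rightarrow> nat) set monoid) \<and>
         \<not> transfer_Krull (MonR :: ('n \<Rightarrow> nat) set monoid) TYPE('g) \<and>
         (\<forall>k::nat. k \<ge> 2 \<longrightarrow> Uk (MonR :: ('n \<Rightarrow> nat) set monoid) k = {2..}) \<and>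
         (\<forall>k::nat. k \<ge> 2 \<longrightarrow> Lset MonR (XY_ideal x y [^]\<^bsub>MonR\<^esub> k) = {2..k}) \<and>
         fully_elastic (MonR :: ('n \<Rightarrow> nat) set monoid)"
  using BF_monoid_MonR not_locally_fg_MonR[OF assms] not_transfer_Krull_MonR[OF assms]
    Uk_MonR[OF assms] Lset_XY_power[OF assms] XY_ideal_pow[OF assms] fully_elastic_MonR[OF assms]
  by simp

end
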